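(* Let $G$ be a hypo-unique domination graph of order $n$. Then $1\leq \gamma(G)\leq \lfloor 2n/5\rfloor+1$. Furthermore: (i) $\gamma(G)=1$ if and only if $G=K_2$; (ii) $\gamma(G)=2$ if and only if $n\geq 4$ is even and $G$ is the complete graph $K_n$ minus a perfect matching; (iii) $\gamma(G)=\lfloor 2n/5\rfloor+1$ if and only if $G\in\{K_2,C_4,C_7\}$.
   Context: All graphs are finite, simple and undirected. A set $D\subseteq V(G)$ is dominating if every vertex of $G$ not in $D$ has a neighbor in $D$; $\gamma(G)$ is the minimum size of a dominating set, and a dominating set of size $\gamma(G)$ is a $\gamma$-set. $G$ is a hypo-unique domination graph if $G$ has at least two $\gamma$-sets but for every $v\in V(G)$ the graph $G-v$ has exactly one $\gamma$-set. $C_m$ denotes the cycle on $m$ vertices. *)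

theory Defs
  imports Main
begin

definition graph :: "'a set \<Rightarrow> ('a \<Rightarrow> 'a \<Rightarrow> bool) \<Rightarrow> bool" where
  "graph V E \<longleftrightarrow> finite V \<and> (\<forall>x y. E x y \<longrightarrow> E y x) \<and> (\<forall>x. \<not> E x x)
      \<and> (\<forall>x y. E x y \<longrightarrow> x \<in> V \<and> y \<in> V)"

definition dominating :: "'a set \<Rightarrow> ('a \<Rightarrow> 'a \<Rightarrow> bool) \<Rightarrow> 'a set \<Rightarrow> bool" where
  "dominating V E D \<longleftrightarrow> D \<subseteq> V \<and> (\<forall>v\<in>V - D. \<exists>u\<in>D. E v u)"

definition gamma :: "'a set \<Rightarrow> ('a \<Rightarrow> 'a \<Rightarrow> bool) \<Rightarrow> nat" where
  "gamma V E = (LEAST k. \<exists>D. dominating V E D \<and> card D = k)"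

definition gamma_set :: "'a set \<Rightarrow> ('a \<Rightarrow> 'a \<Rightarrow> bool) \<Rightarrow> 'a set \<Rightarrow> bool" where
  "gamma_set V E D \<longleftrightarrow> dominating V E D \<and> card D = gamma V E"

definition del_vertex_edges :: "'a set \<Rightarrow> ('a \<Rightarrow> 'a \<Rightarrow> bool) \<Rightarrow> 'a \<Rightarrow> 'a \<Rightarrow> 'a \<Rightarrow> bool" where
  "del_vertex_edges V E v = (\<lambda>x y. E x y \<and> x \<in> V - {v} \<and> y \<in> V - {v})"

definition hypo_unique :: "'a set \<Rightarrow> ('a \<Rightarrow> 'a \<Rightarrow> bool) \<Rightarrow> bool" where
  "hypo_unique V E \<longleftrightarrow>
     (\<exists>D1 D2. gamma_set V E D1 \<and> gamma_set V E D2 \<and> D1 \<noteq> D2) \<and>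
     (\<forall>v\<in>V. \<exists>!D. gamma_set (V - {v}) (del_vertex_edges V E v) D)"

definition graph_iso :: "'a set \<Rightarrow> ('a \<Rightarrow> 'a \<Rightarrow> bool) \<Rightarrow> 'b set \<Rightarrow> ('b \<Rightarrow> 'b \<Rightarrow> bool) \<Rightarrow> bool" where
  "graph_iso V E W F \<longleftrightarrow> (\<exists>f. bij_betw f V W \<and> (\<forall>x\<in>V. \<forall>y\<in>V. E x y \<longleftrightarrow> F (f x) (f y)))"

definition complete_adj :: "nat \<Rightarrow> nat \<Rightarrow> nat \<Rightarrow> bool" where
  "complete_adj m i j \<longleftrightarrow> i < m \<and> j < m \<and> i \<noteq> j"

text \<open>Cycle C_m on {0..<m} (for m \<ge> 3).\<close>
definition cycle_adj :: "nat \<Rightarrow> nat \<Rightarrow> nat \<Rightarrow> bool" where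
  "cycle_adj m i j \<longleftrightarrow> i < m \<and> j < m \<and> (j = (i + 1) mod m \<or> i = (j + 1) mod m)"

text \<open>K_m minus the perfect matching {{0,1},{2,3},...} on {0..<m} (m even).\<close>
definition cocktail_adj :: "nat \<Rightarrow> nat \<Rightarrow> nat \<Rightarrow> bool" where
  "cocktail_adj m i j \<longleftrightarrow> i < m \<and> j < m \<and> i \<noteq> j \<and> i div 2 \<noteq> j div 2"

end

theory Submission
  imports Defs
begin

text \<open>Call $v$ critical if $\gamma(G - v) < \gamma(G)$. Hypo-uniqueness makes $G$ connected, and
  once $n \<ge> 3$ it makes every vertex critical: a non-critical vertex would have critical
  neighbours only of degree one, and trading such pendant vertices for their neighbours produces
  either a smaller dominating set or a second $\gamma$-set of some $G - v$. Then $G$ has no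
  pendant vertices, and the unique $\gamma$-set $D$ of $G - v$ has, since it is unique, two
  private neighbours outside $D$ for each of its $\gamma - 1$ vertices; hence
  $2(\gamma - 1) \<le> (n - 1) - (\gamma - 1)$, i.e. $3\gamma \<le> n + 2$, which gives the bound.
  The graphs with $\gamma = 1$ and $\gamma = 2$ are read off from the $\gamma$-sets of the
  $G - v$, and the bound is attained only for $(n, \gamma) \<in> \{(2, 1), (4, 2), (7, 3)\}$; in the last
  case the equality in the private-neighbour count forces $G$ to be 2-regular with a
  Hamiltonian cycle, i.e. $G = C_7$.\<close>

lemma dominating_subset: "dominating W E D \<Longrightarrow> D \<subseteq> W"
  by (simp add: dominating_def)

lemma gamma_le:
  assumes "finite W" "dominating W E D"
  shows "gamma W E \<le> card D"
  unfolding gamma_def by (rule Least_le) (use assms in blast)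

lemma gamma_set_exists:
  assumes "finite W"
  shows "\<exists>D. gamma_set W E D"
proof -
  have "dominating W E W"
    by (simp add: dominating_def)
  then have "\<exists>k D. dominating W E D \<and> card D = k"
    by blast
  then show ?thesis
    unfolding gamma_set_def gamma_def by (rule LeastI_ex)
qed

lemma gamma_setI:
  "finite W \<Longrightarrow> dominating W E D \<Longrightarrow> card D \<le> gamma W E \<Longrightarrow> gamma_set W E D"
  using gamma_le[of W E D] unfolding gamma_set_def by simp

lemma gamma_set_dominating: "gamma_set W E D \<Longrightarrow> dominating W E D"
  by (simp add: gamma_set_def)

lemma gamma_set_card: "gamma_set W E D \<Longrightarrow> card D = gamma W E"
  by (simp add: gamma_set_def)

lemma gamma_set_subset: "gamma_set W E D \<Longrightarrow> D \<subseteq> W"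
  by (simp add: gamma_set_def dominating_def)

lemma gamma_set_finite: "finite W \<Longrightarrow> gamma_set W E D \<Longrightarrow> finite D"
  by (rule finite_subset[OF gamma_set_subset])

lemma gamma_le_card: "finite W \<Longrightarrow> gamma W E \<le> card W"
  by (rule gamma_le) (auto simp: dominating_def)

lemma gamma_pos:
  assumes "finite W" "W \<noteq> {}"
  shows "0 < gamma W E"
proof -
  obtain D where D: "gamma_set W E D"
    using gamma_set_exists[OF assms(1)] by blast
  have "D \<noteq> {}"
    using D assms(2) by (auto simp: gamma_set_def dominating_def)
  then show ?thesis
    using gamma_set_card[OF D] gamma_set_finite[OF assms(1) D] by (metis card_gt_0_iff)
qed

lemma dominating_Diff_singleton:
  "v \<notin> D \<Longrightarrow> dominating W E D \<Longrightarrow> dominating (W - {v}) E D"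
  by (auto simp: dominating_def)

lemma dominating_insert:
  "dominating (W - {v}) E D \<Longrightarrow> v \<in> W \<Longrightarrow> dominating W E (insert v D)"
  by (auto simp: dominating_def)

lemma gamma_le_gamma_Diff_singleton:
  assumes "finite W" "v \<in> W"
  shows "gamma W E \<le> gamma (W - {v}) E + 1"
proof -
  obtain D where D: "gamma_set (W - {v}) E D"
    using gamma_set_exists[of "W - {v}" E] assms(1) by blast
  have "gamma W E \<le> card (insert v D)"
    using gamma_le[OF assms(1) dominating_insert[OF gamma_set_dominating[OF D] assms(2)]] .
  also have "\<dots> \<le> card D + 1"
    by (simp add: card_insert_le_m1)
  finally show ?thesis
    using gamma_set_card[OF D] by simp
qed

lemma gamma_set_del_vertex_edges_iff:
  "gamma_set (V - {v}) (del_vertex_edges V E v) D \<longleftrightarrow> gamma_set (V - {v}) E D"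
proof -
  have "dominating (V - {v}) (del_vertex_edges V E v) = dominating (V - {v}) E"
    by (intro ext) (auto simp: dominating_def del_vertex_edges_def)
  then show ?thesis
    by (simp only: gamma_set_def gamma_def)
qed

definition pendant :: "('a \<Rightarrow> 'a \<Rightarrow> bool) \<Rightarrow> 'a \<Rightarrow> 'a \<Rightarrow> bool" where
  "pendant E l w \<longleftrightarrow> E l w \<and> (\<forall>z. E l z \<longrightarrow> z = w)"

lemma dominating_replace_pendants:
  assumes "symp E" "dominating W E D" "L \<subseteq> D" "w \<in> W" "\<forall>l\<in>L. pendant E l w"
  shows "dominating W E (insert w (D - L))"
  unfolding dominating_def
proof (intro conjI ballI)
  show "insert w (D - L) \<subseteq> W"
    using assms(2,4) by (auto simp: dominating_def)
next
  fix z assume z: "z \<in> W - insert w (D - L)"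
  show "\<exists>u\<in>insert w (D - L). E z u"
  proof (cases "z \<in> L")
    case True
    then show ?thesis
      using assms(5) by (auto simp: pendant_def)
  next
    case False
    then obtain u where u: "u \<in> D" "E z u"
      using z assms(2) by (auto simp: dominating_def)
    have "u \<notin> L"
      using u(2) z assms(1,5) by (auto simp: pendant_def symp_def)
    then show ?thesis
      using u by blast
  qed
qed

lemma card_insert_Diff_le:
  assumes "finite D" "L \<subseteq> D"
  shows "card (insert w (D - L)) + card L \<le> card D + 1"
proof -
  have "card (insert w (D - L)) \<le> card (D - L) + 1"
    by (simp add: card_insert_le_m1)
  moreover have "card (D - L) + card L = card D"
    using assms by (simp add: card_Diff_subset card_mono finite_subset)
  ultimately show ?thesis
    by linarith
qed

lemma gamma_set_pendants_card:
  assumes "finite W" "symp E" "gamma_set W E D" "L \<subseteq> D" "w \<in> W" "\<forall>l\<in>L. pendant E l w"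
  shows "card L \<le> 1"
proof -
  have "gamma W E \<le> card (insert w (D - L))"
    using gamma_le[OF assms(1) dominating_replace_pendants[OF assms(2)
        gamma_set_dominating[OF assms(3)] assms(4-6)]] .
  then show ?thesis
    using card_insert_Diff_le[OF gamma_set_finite[OF assms(1,3)] assms(4), of w]
      gamma_set_card[OF assms(3)] by linarith
qed

lemma gamma_set_pendant_nbr_notin:
  assumes "finite W" "symp E" "irreflp E" "gamma_set W E D" "l \<in> D" "pendant E l w"
  shows "w \<notin> D"
proof
  assume w: "w \<in> D"
  have "w \<noteq> l"
    using assms(3,6) by (auto simp: pendant_def irreflp_def)
  then have "insert w (D - {l}) = D - {l}"
    using w by blast
  moreover have "gamma W E \<le> card (insert w (D - {l}))"
    by (rule gamma_le[OF assms(1) dominating_replace_pendants[OF assms(2)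
          gamma_set_dominating[OF assms(4)]]])
      (use assms(5,6) w gamma_set_subset[OF assms(4)] in auto)
  ultimately show False
    using card_Diff1_less[OF gamma_set_finite[OF assms(1,4)] assms(5)] gamma_set_card[OF assms(4)]
    by simp
qed

section \<open>Private neighbours of a unique minimum dominating set\<close>

definition private_nbrs :: "'a set \<Rightarrow> ('a \<Rightarrow> 'a \<Rightarrow> bool) \<Rightarrow> 'a set \<Rightarrow> 'a \<Rightarrow> 'a set" where
  "private_nbrs W E D d = {z \<in> W - D. E z d \<and> (\<forall>d'\<in>D. E z d' \<longrightarrow> d' = d)}"

lemma dominating_exchange:
  assumes "symp E" "dominating W E D" "d \<in> D" "u \<in> W" "E d u" "private_nbrs W E D d \<subseteq> {u}"
  shows "dominating W E (insert u (D - {d}))"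
  unfolding dominating_def
proof (intro conjI ballI)
  show "insert u (D - {d}) \<subseteq> W"
    using assms(2,4) by (auto simp: dominating_def)
next
  fix z assume z: "z \<in> W - insert u (D - {d})"
  show "\<exists>x\<in>insert u (D - {d}). E z x"
  proof (cases "z = d")
    case True
    then show ?thesis
      using assms(5) by blast
  next
    case False
    then have "z \<in> W - D" "z \<notin> private_nbrs W E D d"
      using z assms(6) by auto
    moreover obtain x where "x \<in> D" "E z x"
      using \<open>z \<in> W - D\<close> assms(2) by (auto simp: dominating_def)
    ultimately show ?thesis
      by (cases "x = d") (auto simp: private_nbrs_def)
  qed
qed

lemma gamma_set_exchange:
  assumes "finite W" "symp E" "gamma_set W E D" "d \<in> D" "u \<in> W" "E d u"
    "private_nbrs W E D d \<subseteq> {u}"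
  shows "gamma_set W E (insert u (D - {d}))"
proof (rule gamma_setI[OF assms(1)])
  show "dominating W E (insert u (D - {d}))"
    using dominating_exchange[OF assms(2) gamma_set_dominating[OF assms(3)] assms(4-7)] .
  show "card (insert u (D - {d})) \<le> gamma W E"
    using card_insert_Diff_le[OF gamma_set_finite[OF assms(1,3)], of "{d}" u] assms(4)
      gamma_set_card[OF assms(3)] by simp
qed

text \<open>Ore's bound: the complement of a minimum dominating set dominates as well.\<close>

lemma gamma_le_half_card:
  assumes "finite W" "symp E" "irreflp E" "\<forall>x\<in>W. \<exists>y\<in>W. E x y"
  shows "2 * gamma W E \<le> card W"
proof -
  obtain D where D: "gamma_set W E D"
    using gamma_set_exists[OF assms(1)] by blast
  have "dominating W E (W - D)"
    unfolding dominating_def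
  proof (intro conjI ballI)
    fix d assume "d \<in> W - (W - D)"
    then have d: "d \<in> D" "d \<in> W"
      by auto
    show "\<exists>u\<in>W - D. E d u"
    proof (rule ccontr)
      assume no_outer: "\<not> (\<exists>u\<in>W - D. E d u)"
      obtain y where y: "y \<in> W" "E d y"
        using assms(4) d(2) by blast
      have "y \<in> D" "y \<noteq> d"
        using no_outer y assms(3) by (auto simp: irreflp_def)
      have "private_nbrs W E D d = {}"
        using no_outer assms(2) by (auto simp: private_nbrs_def symp_def)
      then have "gamma_set W E (insert y (D - {d}))"
        using gamma_set_exchange[OF assms(1,2) D d(1) y] by blast
      moreover have "insert y (D - {d}) = D - {d}"
        using \<open>y \<in> D\<close> \<open>y \<noteq> d\<close> by blast
      ultimately have "card (D - {d}) = card D"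
        using gamma_set_card[OF D] gamma_set_card by metis
      then show False
        using card_Diff1_less[OF gamma_set_finite[OF assms(1) D] d(1)] by simp
    qed
  qed blast
  then have "gamma W E \<le> card (W - D)"
    by (rule gamma_le[OF assms(1)])
  also have "\<dots> = card W - card D"
    using gamma_set_subset[OF D] gamma_set_finite[OF assms(1) D] by (simp add: card_Diff_subset)
  finally show ?thesis
    using gamma_set_card[OF D] gamma_le_card[OF assms(1), of E] by linarith
qed

lemma unique_gamma_set_private_nbrs:
  assumes "finite W" "symp E" "irreflp E" "\<forall>x\<in>W. \<exists>y\<in>W. E x y"
    and D: "gamma_set W E D" and unique: "\<And>D'. gamma_set W E D' \<Longrightarrow> D' = D"
    and "d \<in> D"
  shows "2 \<le> card (private_nbrs W E D d)"
proof (rule ccontr)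
  assume "\<not> 2 \<le> card (private_nbrs W E D d)"
  moreover have "finite (private_nbrs W E D d)"
    using assms(1) by (simp add: private_nbrs_def)
  ultimately have "card (private_nbrs W E D d) \<le> 1"
    by simp
  then obtain u where u: "u \<in> W" "E d u" "private_nbrs W E D d \<subseteq> {u}"
  proof (cases "private_nbrs W E D d = {}")
    case True
    obtain u where "u \<in> W" "E d u"
      using assms(4) gamma_set_subset[OF D] \<open>d \<in> D\<close> by blast
    then show ?thesis
      using that True by blast
  next
    case False
    then obtain u where "u \<in> private_nbrs W E D d"
      by blast
    then have "private_nbrs W E D d \<subseteq> {u}"
      using \<open>card (private_nbrs W E D d) \<le> 1\<close> \<open>finite (private_nbrs W E D d)\<close>
      by (auto simp: card_le_Suc0_iff_eq)
    then show ?thesis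
      using that assms(2) \<open>u \<in> private_nbrs W E D d\<close> by (auto simp: private_nbrs_def symp_def)
  qed
  have "insert u (D - {d}) = D"
    using unique gamma_set_exchange[OF assms(1,2) D \<open>d \<in> D\<close> u] by blast
  then have "d \<in> insert u (D - {d})"
    using \<open>d \<in> D\<close> by simp
  then have "u = d"
    by simp
  then show False
    using u(2) assms(3) by (simp add: irreflp_def)
qed

lemma card_UN_private_nbrs:
  assumes "finite W" "finite D"
  shows "card (\<Union>d\<in>D. private_nbrs W E D d) = (\<Sum>d\<in>D. card (private_nbrs W E D d))"
  by (rule card_UN_disjoint) (use assms in \<open>auto simp: private_nbrs_def\<close>)

lemma UN_private_nbrs_subset: "(\<Union>d\<in>D. private_nbrs W E D d) \<subseteq> W - D"
  by (auto simp: private_nbrs_def)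

lemma unique_gamma_set_card_le:
  assumes "finite W" "symp E" "irreflp E" "\<forall>x\<in>W. \<exists>y\<in>W. E x y"
    and D: "gamma_set W E D" and unique: "\<And>D'. gamma_set W E D' \<Longrightarrow> D' = D"
  shows "2 * card D \<le> card (W - D)"
proof -
  have "2 * card D = (\<Sum>d\<in>D. 2)"
    by simp
  also have "\<dots> \<le> (\<Sum>d\<in>D. card (private_nbrs W E D d))"
    using unique_gamma_set_private_nbrs[OF assms] by (intro sum_mono) simp
  also have "\<dots> = card (\<Union>d\<in>D. private_nbrs W E D d)"
    using card_UN_private_nbrs[OF assms(1) gamma_set_finite[OF assms(1) D]] by simp
  also have "\<dots> \<le> card (W - D)"
    using assms(1) by (intro card_mono UN_private_nbrs_subset) simp
  finally show ?thesis .
qed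

lemma unique_gamma_set_card_eq:
  assumes "finite W" "symp E" "irreflp E" "\<forall>x\<in>W. \<exists>y\<in>W. E x y"
    and D: "gamma_set W E D" and unique: "\<And>D'. gamma_set W E D' \<Longrightarrow> D' = D"
    and tight: "card (W - D) = 2 * card D"
  shows "\<forall>d\<in>D. card (private_nbrs W E D d) = 2"
    and "(\<Union>d\<in>D. private_nbrs W E D d) = W - D"
proof -
  let ?P = "\<lambda>d. private_nbrs W E D d"
  have finD: "finite D"
    using gamma_set_finite[OF assms(1) D] .
  have ge2: "\<forall>d\<in>D. 2 \<le> card (?P d)"
    using unique_gamma_set_private_nbrs[OF assms(1-6)] by blast
  have card_U: "card (\<Union>d\<in>D. ?P d) = (\<Sum>d\<in>D. card (?P d))"
    by (rule card_UN_private_nbrs[OF assms(1) finD])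
  have "card (\<Union>d\<in>D. ?P d) \<le> card (W - D)"
    using assms(1) by (intro card_mono UN_private_nbrs_subset) simp
  then have sum_le: "(\<Sum>d\<in>D. card (?P d)) \<le> (\<Sum>d\<in>D. 2)"
    using card_U tight by simp
  show "\<forall>d\<in>D. card (?P d) = 2"
  proof (rule ccontr)
    assume "\<not> (\<forall>d\<in>D. card (?P d) = 2)"
    then obtain d where "d \<in> D" "2 < card (?P d)"
      using ge2 by force
    then have "(\<Sum>d\<in>D. 2) < (\<Sum>d\<in>D. card (?P d))"
      using ge2 finD by (intro sum_strict_mono_ex1) auto
    then show False
      using sum_le by simp
  qed
  then have "card (\<Union>d\<in>D. ?P d) = card (W - D)"
    using card_U tight by simp
  then show "(\<Union>d\<in>D. ?P d) = W - D"
    using assms(1) by (intro card_subset_eq UN_private_nbrs_subset) simp_all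
qed

lemma dominating_Int:
  assumes "dominating (S \<union> T) E D" "\<forall>x\<in>S. \<forall>y\<in>T. \<not> E x y"
  shows "dominating S E (D \<inter> S)"
  unfolding dominating_def
proof (intro conjI ballI)
  fix z assume z: "z \<in> S - D \<inter> S"
  then obtain u where "u \<in> D" "E z u"
    using assms(1) by (auto simp: dominating_def)
  moreover from this have "u \<in> S"
    using z assms by (auto simp: dominating_def)
  ultimately show "\<exists>u\<in>D \<inter> S. E z u"
    by blast
qed blast

lemma dominating_Un_iff:
  assumes "\<forall>x\<in>S. \<forall>y\<in>T. \<not> E x y \<and> \<not> E y x"
  shows "dominating (S \<union> T) E D \<longleftrightarrow>
    D \<subseteq> S \<union> T \<and> dominating S E (D \<inter> S) \<and> dominating T E (D \<inter> T)"
proof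
  assume D: "dominating (S \<union> T) E D"
  moreover have "dominating (T \<union> S) E D"
    using D by (simp add: Un_commute)
  ultimately show "D \<subseteq> S \<union> T \<and> dominating S E (D \<inter> S) \<and> dominating T E (D \<inter> T)"
    using dominating_Int[of S T E D] dominating_Int[of T S E D] assms dominating_subset[OF D]
    by blast
qed (auto simp: dominating_def)

lemma card_Int_Un_disjoint:
  "finite D \<Longrightarrow> D \<subseteq> S \<union> T \<Longrightarrow> S \<inter> T = {} \<Longrightarrow> card D = card (D \<inter> S) + card (D \<inter> T)"
  by (subst card_Un_disjoint[symmetric]) (auto intro: arg_cong[where f = card])

lemma gamma_Un:
  assumes "finite S" "finite T" "S \<inter> T = {}"
    and no_edges: "\<forall>x\<in>S. \<forall>y\<in>T. \<not> E x y \<and> \<not> E y x"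
  shows "gamma (S \<union> T) E = gamma S E + gamma T E"
proof (rule antisym)
  obtain DS DT where DS: "gamma_set S E DS" and DT: "gamma_set T E DT"
    using gamma_set_exists[OF assms(1), of E] gamma_set_exists[OF assms(2), of E] by blast
  have "(DS \<union> DT) \<inter> S = DS" "(DS \<union> DT) \<inter> T = DT"
    using gamma_set_subset[OF DS] gamma_set_subset[OF DT] assms(3) by auto
  then have "dominating (S \<union> T) E (DS \<union> DT)"
    unfolding dominating_Un_iff[OF no_edges]
    using gamma_set_dominating[OF DS] gamma_set_dominating[OF DT]
      gamma_set_subset[OF DS] gamma_set_subset[OF DT] by auto
  then have "gamma (S \<union> T) E \<le> card (DS \<union> DT)"
    using assms(1,2) by (intro gamma_le) simp_all
  also have "\<dots> \<le> card DS + card DT"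
    by (rule card_Un_le)
  finally show "gamma (S \<union> T) E \<le> gamma S E + gamma T E"
    using gamma_set_card[OF DS] gamma_set_card[OF DT] by simp
next
  have fin: "finite (S \<union> T)"
    using assms(1,2) by simp
  obtain D where D: "gamma_set (S \<union> T) E D"
    using gamma_set_exists[OF fin, of E] by blast
  have split: "D \<subseteq> S \<union> T" "dominating S E (D \<inter> S)" "dominating T E (D \<inter> T)"
    using gamma_set_dominating[OF D] unfolding dominating_Un_iff[OF no_edges] by simp_all
  have "gamma S E + gamma T E \<le> card (D \<inter> S) + card (D \<inter> T)"
    using gamma_le[OF assms(1) split(2)] gamma_le[OF assms(2) split(3)] by simp
  also have "\<dots> = card D"
    using card_Int_Un_disjoint[OF gamma_set_finite[OF fin D] split(1) assms(3)] by simp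
  finally show "gamma S E + gamma T E \<le> gamma (S \<union> T) E"
    using gamma_set_card[OF D] by simp
qed

lemma gamma_set_Un_iff:
  assumes "finite S" "finite T" "S \<inter> T = {}"
    and no_edges: "\<forall>x\<in>S. \<forall>y\<in>T. \<not> E x y \<and> \<not> E y x"
    and "D \<subseteq> S \<union> T"
  shows "gamma_set (S \<union> T) E D \<longleftrightarrow> gamma_set S E (D \<inter> S) \<and> gamma_set T E (D \<inter> T)"
proof -
  have "finite D"
    using assms(1,2,5) finite_subset by blast
  then have card_D: "card D = card (D \<inter> S) + card (D \<inter> T)"
    using card_Int_Un_disjoint[OF _ assms(5,3)] by simp
  have "gamma S E \<le> card (D \<inter> S)" if "dominating S E (D \<inter> S)"
    using gamma_le[OF assms(1) that] .
  moreover have "gamma T E \<le> card (D \<inter> T)" if "dominating T E (D \<inter> T)"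
    using gamma_le[OF assms(2) that] .
  moreover have "dominating (S \<union> T) E D \<longleftrightarrow> dominating S E (D \<inter> S) \<and> dominating T E (D \<inter> T)"
    using dominating_Un_iff[OF no_edges] assms(5) by blast
  ultimately show ?thesis
    unfolding gamma_set_def gamma_Un[OF assms(1-4)] card_D by linarith
qed

section \<open>Hypo-unique domination graphs\<close>

locale hypo_unique_graph =
  fixes V :: "'a set" and E :: "'a \<Rightarrow> 'a \<Rightarrow> bool"
  assumes graph: "graph V E" and hypo_unique: "hypo_unique V E"
begin

lemma finite_V: "finite V"
  using graph by (simp add: graph_def)

lemma symp_E: "symp E"
  using graph by (simp add: graph_def symp_def)

lemma irreflp_E: "irreflp E"
  using graph by (simp add: graph_def irreflp_def)

lemma E_sym: "E x y \<Longrightarrow> E y x"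
  using graph by (simp add: graph_def)

lemma E_irrefl: "\<not> E x x"
  using graph by (simp add: graph_def)

lemma E_in_V: "E x y \<Longrightarrow> x \<in> V" "E x y \<Longrightarrow> y \<in> V"
  using graph by (simp_all add: graph_def)

lemma gamma_set_delete_exists: "\<exists>D. gamma_set (V - {v}) E D"
  using gamma_set_exists[of "V - {v}" E] finite_V by blast

lemma gamma_set_delete_unique:
  assumes "v \<in> V" "gamma_set (V - {v}) E D1" "gamma_set (V - {v}) E D2"
  shows "D1 = D2"
  using hypo_unique assms unfolding hypo_unique_def gamma_set_del_vertex_edges_iff by blast

lemma two_gamma_sets:
  obtains D1 D2 where "gamma_set V E D1" "gamma_set V E D2" "D1 \<noteq> D2"
  using hypo_unique unfolding hypo_unique_def by blast

lemma gamma_V_pos: "0 < gamma V E"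
proof -
  obtain D1 D2 where "gamma_set V E D1" "gamma_set V E D2" "D1 \<noteq> D2"
    by (rule two_gamma_sets)
  then have "V \<noteq> {}"
    using gamma_set_subset by fastforce
  then show ?thesis
    using gamma_pos finite_V by blast
qed

lemma gamma_V_less_card: "gamma V E < card V"
proof (rule ccontr)
  assume "\<not> gamma V E < card V"
  then have "gamma V E = card V"
    using gamma_le_card[OF finite_V, of E] by simp
  then have "D = V" if "gamma_set V E D" for D
    using card_subset_eq[OF finite_V gamma_set_subset[OF that]] gamma_set_card[OF that] by simp
  moreover obtain D1 D2 where "gamma_set V E D1" "gamma_set V E D2" "D1 \<noteq> D2"
    by (rule two_gamma_sets)
  ultimately show False
    by blast
qed

lemma card_V_ge_2: "2 \<le> card V"
  using gamma_V_pos gamma_V_less_card by linarith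

text \<open>Deleting a vertex outside a component $S$ does not affect the $\gamma$-sets restricted
  to $S$, so uniqueness in $G - t$ forces all $\gamma$-sets of $G$ to agree on $S$.\<close>

lemma gamma_sets_agree_on_component:
  assumes "V = S \<union> T" "S \<inter> T = {}" "\<forall>x\<in>S. \<forall>y\<in>T. \<not> E x y \<and> \<not> E y x" "t \<in> T"
    and D1: "gamma_set V E D1" and D2: "gamma_set V E D2"
  shows "D1 \<inter> S = D2 \<inter> S"
proof -
  have fin: "finite S" "finite T" "finite (T - {t})"
    using finite_V assms(1) by auto
  have split: "V - {t} = S \<union> (T - {t})"
    using assms(1,2,4) by blast
  have no_edges: "S \<inter> (T - {t}) = {}" "\<forall>x\<in>S. \<forall>y\<in>T - {t}. \<not> E x y \<and> \<not> E y x"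
    using assms(2,3) by auto
  obtain X where X: "gamma_set (T - {t}) E X"
    using gamma_set_exists[OF fin(3), of E] by blast
  have XS: "X \<inter> S = {}" "X \<inter> (T - {t}) = X"
    using gamma_set_subset[OF X] assms(2) by auto
  have extend: "gamma_set (V - {t}) E ((D \<inter> S) \<union> X)" if D: "gamma_set V E D" for D
  proof -
    have "gamma_set (S \<union> T) E D"
      using D assms(1) by simp
    then have "gamma_set S E (D \<inter> S)"
      using gamma_set_Un_iff[OF fin(1,2) assms(2,3) gamma_set_subset[OF \<open>gamma_set (S \<union> T) E D\<close>]]
      by simp
    moreover have "D \<inter> S \<union> X \<subseteq> S \<union> (T - {t})"
      using gamma_set_subset[OF X] by blast
    moreover have "(D \<inter> S \<union> X) \<inter> S = D \<inter> S" "(D \<inter> S \<union> X) \<inter> (T - {t}) = X"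
      using XS assms(2) by auto
    ultimately show ?thesis
      unfolding split using gamma_set_Un_iff[OF fin(1,3) no_edges] X by simp
  qed
  have "(D1 \<inter> S) \<union> X = (D2 \<inter> S) \<union> X"
    using gamma_set_delete_unique[OF _ extend[OF D1] extend[OF D2]] assms(1,4) by simp
  then show ?thesis
    using XS by blast
qed

lemma connected:
  assumes "S \<subseteq> V" "S \<noteq> {}" "\<forall>x\<in>S. \<forall>y. E x y \<longrightarrow> y \<in> S"
  shows "S = V"
proof (rule ccontr)
  assume "S \<noteq> V"
  define T where "T = V - S"
  obtain s t where "s \<in> S" "t \<in> T"
    using assms(1,2) \<open>S \<noteq> V\<close> by (auto simp: T_def)
  have split: "V = S \<union> T" "V = T \<union> S" "S \<inter> T = {}" "T \<inter> S = {}"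
    using assms(1) by (auto simp: T_def)
  have no_edges: "\<forall>x\<in>S. \<forall>y\<in>T. \<not> E x y \<and> \<not> E y x" "\<forall>x\<in>T. \<forall>y\<in>S. \<not> E x y \<and> \<not> E y x"
    using assms(3) E_sym by (auto simp: T_def)
  obtain D1 D2 where D: "gamma_set V E D1" "gamma_set V E D2" "D1 \<noteq> D2"
    by (rule two_gamma_sets)
  have "D1 \<inter> S = D2 \<inter> S"
    by (rule gamma_sets_agree_on_component[OF split(1,3) no_edges(1) \<open>t \<in> T\<close> D(1,2)])
  moreover have "D1 \<inter> T = D2 \<inter> T"
    by (rule gamma_sets_agree_on_component[OF split(2,4) no_edges(2) \<open>s \<in> S\<close> D(1,2)])
  moreover have "D1 \<subseteq> S \<union> T" "D2 \<subseteq> S \<union> T"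
    using gamma_set_subset[OF D(1)] gamma_set_subset[OF D(2)] split(1) by simp_all
  ultimately show False
    using D(3) by blast
qed

lemma exists_nbr:
  assumes "x \<in> V"
  shows "\<exists>y. E x y"
proof (rule ccontr)
  assume "\<nexists>y. E x y"
  then have "{x} = V"
    using connected[of "{x}"] assms by auto
  then show False
    using card_V_ge_2 by auto
qed

end

section \<open>Critical vertices\<close>

definition critical :: "'a set \<Rightarrow> ('a \<Rightarrow> 'a \<Rightarrow> bool) \<Rightarrow> 'a \<Rightarrow> bool" where
  "critical V E v \<longleftrightarrow> gamma (V - {v}) E < gamma V E"

context hypo_unique_graph
begin

lemma gamma_delete_critical:
  "v \<in> V \<Longrightarrow> critical V E v \<Longrightarrow> gamma (V - {v}) E = gamma V E - 1"
  using gamma_le_gamma_Diff_singleton[OF finite_V, of v E] by (simp add: critical_def)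

lemma gamma_set_delete_noncritical:
  assumes "\<not> critical V E v" "dominating (V - {v}) E D" "card D \<le> gamma V E"
  shows "gamma_set (V - {v}) E D"
  using assms finite_V by (intro gamma_setI) (auto simp: critical_def)

lemma gamma_sets_eq_if_noncritical:
  assumes "v \<in> V" "\<not> critical V E v" "gamma_set V E D1" "gamma_set V E D2" "v \<notin> D1" "v \<notin> D2"
  shows "D1 = D2"
proof -
  have "gamma_set (V - {v}) E D" if "gamma_set V E D" "v \<notin> D" for D
    using gamma_set_delete_noncritical[OF assms(2) dominating_Diff_singleton[OF that(2)
          gamma_set_dominating[OF that(1)]]] gamma_set_card[OF that(1)] by simp
  then show ?thesis
    using gamma_set_delete_unique assms by blast
qed

lemma gamma_set_delete_critical:
  assumes "x \<in> V" "critical V E x" "gamma_set (V - {x}) E D"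
  shows "card D = gamma V E - 1" "\<forall>u\<in>D. \<not> E x u"
proof -
  show card_D: "card D = gamma V E - 1"
    using gamma_set_card[OF assms(3)] gamma_delete_critical[OF assms(1,2)] by simp
  show "\<forall>u\<in>D. \<not> E x u"
  proof (intro ballI notI)
    fix u assume "u \<in> D" "E x u"
    then have "dominating V E D"
      using gamma_set_dominating[OF assms(3)] assms(1) by (auto simp: dominating_def)
    then show False
      using gamma_le[OF finite_V] card_D gamma_V_pos by fastforce
  qed
qed

lemma gamma_set_insert_delete_critical:
  assumes "x \<in> V" "critical V E x" "gamma_set (V - {x}) E D" "y = x \<or> E x y"
  shows "gamma_set V E (insert y D)" "y \<notin> D"
proof -
  show "y \<notin> D"
    using assms gamma_set_delete_critical(2)[OF assms(1-3)] gamma_set_subset[OF assms(3)] by blast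
  have "dominating V E (insert y D)"
    using gamma_set_dominating[OF assms(3)] assms(1,4) E_in_V
    by (auto simp: dominating_def)
  moreover have "card (insert y D) = gamma V E"
    using \<open>y \<notin> D\<close> gamma_set_delete_critical(1)[OF assms(1-3)] gamma_V_pos
      gamma_set_finite[OF _ assms(3)] finite_V by simp
  ultimately show "gamma_set V E (insert y D)"
    by (simp add: gamma_set_def)
qed

lemma pendant_if_critical_nbr_noncritical:
  assumes "x \<in> V" "critical V E x" "v \<in> V" "\<not> critical V E v" "E x v"
  shows "pendant E x v"
  unfolding pendant_def
proof (intro conjI allI impI)
  fix y assume "E x y"
  obtain D where D: "gamma_set (V - {x}) E D"
    using gamma_set_delete_exists by blast
  show "y = v"
  proof (rule ccontr)
    assume "y \<noteq> v"
    have "v \<noteq> x"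
      using assms(5) E_irrefl by blast
    have "v \<notin> D"
      using gamma_set_delete_critical(2)[OF assms(1,2) D] assms(5) by blast
    then have v_notin: "v \<notin> insert x D" "v \<notin> insert y D"
      using \<open>y \<noteq> v\<close> \<open>v \<noteq> x\<close> by simp_all
    have "gamma_set V E (insert x D)" "gamma_set V E (insert y D)"
      using gamma_set_insert_delete_critical(1)[OF assms(1,2) D] \<open>E x y\<close> by simp_all
    from gamma_sets_eq_if_noncritical[OF assms(3,4) this v_notin]
    have "x \<in> insert y D"
      by (metis insertI1)
    moreover have "x \<notin> D"
      using gamma_set_subset[OF D] by blast
    ultimately show False
      using \<open>E x y\<close> E_irrefl by simp
  qed
qed (fact assms(5))

lemma two_critical_pendants:
  assumes "w \<in> V" "\<not> critical V E w" "y \<in> V" "critical V E y" "z \<in> V" "critical V E z"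
    and "y \<noteq> z" "pendant E y w" "pendant E z w"
  shows False
proof -
  obtain D where D: "gamma_set (V - {y}) E D"
    using gamma_set_delete_exists by blast
  have "E y w"
    using assms(8) by (simp add: pendant_def)
  then have "w \<notin> D"
    using gamma_set_delete_critical(2)[OF assms(3,4) D] by blast
  have "z \<in> D"
  proof (rule ccontr)
    assume "z \<notin> D"
    then obtain u where "u \<in> D" "E z u"
      using gamma_set_dominating[OF D] assms(5,7) by (auto simp: dominating_def)
    then show False
      using assms(9) \<open>w \<notin> D\<close> by (auto simp: pendant_def)
  qed
  then have "card {y, z} \<le> 1"
    using gamma_set_pendants_card[OF finite_V symp_E
        gamma_set_insert_delete_critical(1)[OF assms(3,4) D, of y] _ assms(1), of "{y, z}"]
      assms(8,9) by simp
  then show False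
    using assms(7) by simp
qed

lemma card_le_twice_gamma_if_all_noncritical:
  assumes "\<forall>v\<in>V. \<not> critical V E v"
  shows "card V \<le> 2 * gamma V E"
proof -
  obtain D1 D2 where D: "gamma_set V E D1" "gamma_set V E D2" "D1 \<noteq> D2"
    by (rule two_gamma_sets)
  have "V \<subseteq> D1 \<union> D2"
    using gamma_sets_eq_if_noncritical[OF _ _ D(1,2)] assms D(3) by blast
  then have "card V \<le> card (D1 \<union> D2)"
    using gamma_set_finite[OF finite_V D(1)] gamma_set_finite[OF finite_V D(2)] by (simp add: card_mono)
  also have "\<dots> \<le> card D1 + card D2"
    by (rule card_Un_le)
  finally show ?thesis
    using gamma_set_card[OF D(1)] gamma_set_card[OF D(2)] by simp
qed

text \<open>Otherwise $G - v$ has no isolated vertex, and Ore's bound for $G - v$ contradicts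
  $n \<le> 2\gamma(G) \<le> 2\gamma(G - v)$.\<close>

lemma exists_pendant_at_noncritical:
  assumes "v \<in> V" "\<not> critical V E v" "card V \<le> 2 * gamma V E"
  shows "\<exists>x. pendant E x v"
proof (rule ccontr)
  assume no_pendant: "\<nexists>x. pendant E x v"
  have "\<exists>y\<in>V - {v}. E z y" if z: "z \<in> V - {v}" for z
  proof -
    obtain y where "E z y"
      using exists_nbr z by blast
    then obtain y' where "E z y'" "y' \<noteq> v"
      using no_pendant by (auto simp: pendant_def)
    then show ?thesis
      using E_in_V(2) by blast
  qed
  then have "2 * gamma (V - {v}) E \<le> card (V - {v})"
    using finite_V symp_E irreflp_E by (intro gamma_le_half_card) auto
  moreover have "card (V - {v}) = card V - 1"
    using assms(1) finite_V by simp
  ultimately show False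
    using assms(2,3) gamma_V_pos by (simp add: critical_def)
qed

lemma mutual_pendants:
  assumes "pendant E x v" "pendant E v x"
  shows "V = {x, v}"
  using connected[of "{x, v}"] assms E_in_V by (auto simp: pendant_def)

lemma exists_critical:
  assumes "3 \<le> card V"
  shows "\<exists>x\<in>V. critical V E x"
proof (rule ccontr)
  assume "\<not> (\<exists>x\<in>V. critical V E x)"
  then have noncritical: "\<forall>x\<in>V. \<not> critical V E x" and "card V \<le> 2 * gamma V E"
    using card_le_twice_gamma_if_all_noncritical by blast+
  obtain v where "v \<in> V"
    using assms by fastforce
  then obtain x where x: "pendant E x v"
    using exists_pendant_at_noncritical noncritical \<open>card V \<le> 2 * gamma V E\<close> by blast
  then have "x \<in> V"
    using E_in_V by (auto simp: pendant_def)
  then obtain z where z: "pendant E z x"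
    using exists_pendant_at_noncritical noncritical \<open>card V \<le> 2 * gamma V E\<close> by blast
  then have "z = v"
    using x E_sym by (auto simp: pendant_def)
  then have "V = {x, v}"
    using mutual_pendants x z by blast
  then show False
    using assms by (simp add: card_insert_if split: if_splits)
qed

text \<open>Connectedness: the non-critical vertices together with their neighbours form a
  component, since a critical neighbour of a non-critical vertex is a pendant vertex.\<close>

lemma critical_pendant_at_noncritical:
  assumes "w0 \<in> V" "\<not> critical V E w0" "z \<in> V" "critical V E z"
  shows "\<exists>w\<in>V. \<not> critical V E w \<and> pendant E z w"
proof -
  define B where "B = {w \<in> V. \<not> critical V E w}"
  define S where "S = B \<union> {x \<in> V. \<exists>w\<in>B. E x w}"
  have "S = V"
  proof (rule connected)
    show "S \<subseteq> V" "S \<noteq> {}"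
      using assms(1,2) by (auto simp: S_def B_def)
    show "\<forall>x\<in>S. \<forall>y. E x y \<longrightarrow> y \<in> S"
    proof (intro ballI allI impI)
      fix x y assume "x \<in> S" "E x y"
      show "y \<in> S"
      proof (cases "x \<in> B")
        case True
        then show ?thesis
          using E_sym[OF \<open>E x y\<close>] E_in_V(2)[OF \<open>E x y\<close>] by (auto simp: S_def)
      next
        case False
        then obtain w where "w \<in> B" "E x w" "x \<in> V" "critical V E x"
          using \<open>x \<in> S\<close> by (auto simp: S_def B_def)
        then have "pendant E x w"
          using pendant_if_critical_nbr_noncritical by (auto simp: B_def)
        then show ?thesis
          using \<open>E x y\<close> \<open>w \<in> B\<close> by (auto simp: pendant_def S_def)
      qed
    qed
  qed
  then obtain w where "w \<in> B" "E z w"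
    using assms(3,4) by (auto simp: S_def B_def)
  then show ?thesis
    using pendant_if_critical_nbr_noncritical assms(3,4) by (auto simp: B_def)
qed

lemma noncritical_mem_insert:
  assumes "x \<in> V" "critical V E x" "E x v" "gamma_set (V - {x}) E D"
    and "u \<in> V" "\<not> critical V E u"
  shows "u \<in> insert v D"
proof (rule ccontr)
  assume u: "u \<notin> insert v D"
  have x_D: "gamma_set V E (insert x D)" "x \<notin> D"
    using gamma_set_insert_delete_critical[OF assms(1,2,4), of x] by simp_all
  have v_D: "gamma_set V E (insert v D)"
    using gamma_set_insert_delete_critical(1)[OF assms(1,2,4), of v] assms(3) by simp
  have "u \<noteq> x"
    using assms(2,6) by blast
  then have "insert x D = insert v D"
    using gamma_sets_eq_if_noncritical[OF assms(5,6) x_D(1) v_D] u by simp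
  then show False
    using x_D(2) assms(3) E_irrefl by (metis insertCI insertE)
qed

lemma delete_critical_gamma_set_noncritical:
  assumes "x \<in> V" "critical V E x" "v \<in> V" "\<not> critical V E v" "pendant E x v"
    and "gamma_set (V - {x}) E D" "l \<in> D"
  shows "\<not> critical V E l"
proof
  assume l: "critical V E l"
  have "l \<in> V" "l \<noteq> x"
    using gamma_set_subset[OF assms(6)] assms(7) by auto
  then obtain w where w: "w \<in> V" "\<not> critical V E w" "pendant E l w"
    using critical_pendant_at_noncritical[OF assms(3,4) _ l] by blast
  have "w \<in> insert v D"
    using noncritical_mem_insert[OF assms(1,2) _ assms(6) w(1,2)] assms(5) by (simp add: pendant_def)
  then show False
  proof
    assume "w = v"
    then show False
      using two_critical_pendants[OF assms(3,4,1,2) \<open>l \<in> V\<close> l] \<open>l \<noteq> x\<close> assms(5) w(3) by auto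
  next
    assume "w \<in> D"
    then show False
      using gamma_set_pendant_nbr_notin[OF _ symp_E irreflp_E assms(6,7) w(3)] finite_V by simp
  qed
qed

lemma noncritical_iff_mem_insert:
  assumes "x \<in> V" "critical V E x" "v \<in> V" "\<not> critical V E v" "pendant E x v"
    and "gamma_set (V - {x}) E D" "u \<in> V"
  shows "\<not> critical V E u \<longleftrightarrow> u \<in> insert v D"
  using noncritical_mem_insert[OF assms(1,2) _ assms(6,7)] assms(4,5)
    delete_critical_gamma_set_noncritical[OF assms(1-6)] by (auto simp: pendant_def)

lemma private_nbrs_subset_critical_pendant:
  assumes "w \<in> V" "\<not> critical V E w" "y \<in> V" "critical V E y" "pendant E y w"
    and "W \<subseteq> V" "\<forall>t\<in>W - F. critical V E t"
  shows "private_nbrs W E F w \<subseteq> {y}"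
proof
  fix t assume "t \<in> private_nbrs W E F w"
  then have t: "t \<in> V" "critical V E t" "E t w"
    using assms(6,7) unfolding private_nbrs_def by blast+
  show "t \<in> {y}"
  proof (rule ccontr)
    assume "t \<notin> {y}"
    then show False
      using two_critical_pendants[OF assms(1-4) t(1,2) _ assms(5)
          pendant_if_critical_nbr_noncritical[OF t(1,2) assms(1,2) t(3)]] by simp
  qed
qed

text \<open>If some vertex is non-critical, the critical vertex $x$ is unique: a second one, $y$, is a
  pendant vertex at some $w \<in> D$, and trading $w$ for $y$ in $\{x\} \<union> D$ gives a second
  $\gamma$-set of $G - v$.\<close>

lemma critical_unique:
  assumes "x \<in> V" "critical V E x" "v \<in> V" "\<not> critical V E v" "pendant E x v"
    and D: "gamma_set (V - {x}) E D" and "y \<in> V" "critical V E y"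
  shows "y = x"
proof (rule ccontr)
  assume "y \<noteq> x"
  let ?F = "insert x D"
  have F: "gamma_set V E ?F"
    using gamma_set_insert_delete_critical(1)[OF assms(1,2) D, of x] by simp
  note noncritical_iff = noncritical_iff_mem_insert[OF assms(1-5) D]
  have "v \<notin> D"
    using gamma_set_insert_delete_critical(2)[OF assms(1,2) D, of v] assms(5) by (simp add: pendant_def)
  then have "v \<notin> ?F" "y \<notin> ?F"
    using noncritical_iff assms(2,4,7,8) \<open>y \<noteq> x\<close> by auto
  obtain w where w: "w \<in> V" "\<not> critical V E w" "pendant E y w"
    using critical_pendant_at_noncritical[OF assms(3,4,7,8)] by blast
  have "w \<noteq> v"
  proof
    assume "w = v"
    obtain u where "u \<in> ?F" "E y u"
      using gamma_set_dominating[OF F] \<open>y \<notin> ?F\<close> assms(7) by (auto simp: dominating_def)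
    then show False
      using w(3) \<open>w = v\<close> \<open>v \<notin> ?F\<close> by (auto simp: pendant_def)
  qed
  then have "w \<in> ?F"
    using noncritical_iff w(1,2) by simp
  have F_v: "gamma_set (V - {v}) E ?F"
    using gamma_set_delete_noncritical[OF assms(4) dominating_Diff_singleton[OF \<open>v \<notin> ?F\<close>
          gamma_set_dominating[OF F]]] gamma_set_card[OF F] by simp
  have "\<forall>t\<in>V - {v} - ?F. critical V E t"
    using noncritical_iff by blast
  then have "private_nbrs (V - {v}) E ?F w \<subseteq> {y}"
    using private_nbrs_subset_critical_pendant[OF w(1,2) assms(7,8) w(3)] by blast
  moreover have "y \<in> V - {v}" "E w y"
    using assms(4,7,8) w(3) E_sym by (auto simp: pendant_def)
  moreover have "finite (V - {v})"
    using finite_V by simp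
  ultimately have "gamma_set (V - {v}) E (insert y (?F - {w}))"
    using gamma_set_exchange[OF _ symp_E F_v \<open>w \<in> ?F\<close>] by simp
  then have "insert y (?F - {w}) = ?F"
    by (rule gamma_set_delete_unique[OF assms(3) _ F_v])
  then show False
    using \<open>y \<notin> ?F\<close> by blast
qed

theorem all_critical:
  assumes "3 \<le> card V" "v \<in> V"
  shows "critical V E v"
proof (rule ccontr)
  assume v: "\<not> critical V E v"
  obtain x where x: "x \<in> V" "critical V E x"
    using exists_critical[OF assms(1)] by blast
  then obtain w where w: "w \<in> V" "\<not> critical V E w" "pendant E x w"
    using critical_pendant_at_noncritical[OF assms(2) v] by blast
  obtain D where D: "gamma_set (V - {x}) E D"
    using gamma_set_delete_exists by blast
  have "E x w"
    using w(3) by (simp add: pendant_def)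
  have "u \<in> insert x (insert w D)" if "u \<in> V" for u
  proof (cases "critical V E u")
    case True
    then show ?thesis
      using critical_unique[OF x w D that] by simp
  next
    case False
    then show ?thesis
      using noncritical_mem_insert[OF x \<open>E x w\<close> D that] by simp
  qed
  then have "V = insert x (insert w D)"
    using gamma_set_subset[OF D] x(1) w(1) by blast
  moreover have "w \<notin> D"
    using gamma_set_insert_delete_critical(2)[OF x D] \<open>E x w\<close> by simp
  moreover have "x \<notin> insert w D"
    using gamma_set_subset[OF D] x(2) w(2) by auto
  ultimately have "card V = gamma V E + 1"
    using gamma_set_delete_critical(1)[OF x D] gamma_set_finite[OF _ D] finite_V gamma_V_pos
    by simp
  moreover have "2 * gamma V E \<le> card V"
    using gamma_le_half_card[OF finite_V symp_E irreflp_E] exists_nbr E_in_V by blast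
  ultimately show False
    using assms(1) by linarith
qed

lemma gamma_delete_vertex:
  "3 \<le> card V \<Longrightarrow> v \<in> V \<Longrightarrow> gamma (V - {v}) E = gamma V E - 1"
  using all_critical gamma_delete_critical by blast

end

section \<open>The bound and the graphs with small domination number\<close>

lemma graph_iso_card: "graph_iso V E {0..<m} F \<Longrightarrow> card V = m"
  unfolding graph_iso_def using bij_betw_same_card by fastforce

lemma bij_betw_extend_two:
  assumes "bij_betw f W {0..<k}" "a \<notin> W" "b \<notin> W" "a \<noteq> b"
  shows "bij_betw (f(a := k, b := Suc k)) (insert a (insert b W)) {0..<k + 2}"
proof -
  have "bij_betw (f(a := k, b := Suc k)) W {0..<k}"
    using assms(1) by (rule bij_betw_cong[THEN iffD1, rotated]) (use assms(2,3) in auto)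
  moreover have "bij_betw (f(a := k, b := Suc k)) {a, b} {k, Suc k}"
    using assms(4) by (auto simp: bij_betw_def inj_on_def)
  ultimately have "bij_betw (f(a := k, b := Suc k)) (W \<union> {a, b}) ({0..<k} \<union> {k, Suc k})"
    by (rule bij_betw_combine) auto
  moreover have "{0..<k} \<union> {k, Suc k} = {0..<k + 2}"
    by auto
  ultimately show ?thesis
    by (simp add: insert_commute)
qed

lemma pair_enumeration_extend:
  assumes f: "bij_betw f W {0..<k}" "even k"
    and pairs: "\<forall>x\<in>W. \<forall>y\<in>W. f x div 2 = f y div 2 \<longleftrightarrow> y = x \<or> y = p x"
    and closed: "\<forall>x\<in>W. p x \<in> W" and a: "a \<notin> W" "p a \<notin> W" "p a \<noteq> a" "p (p a) = a"
  defines "g \<equiv> f(a := k, p a := Suc k)"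
  shows "bij_betw g (insert a (insert (p a) W)) {0..<k + 2}"
    and "\<forall>x\<in>insert a (insert (p a) W). \<forall>y\<in>insert a (insert (p a) W).
      g x div 2 = g y div 2 \<longleftrightarrow> y = x \<or> y = p x"
proof -
  show "bij_betw g (insert a (insert (p a) W)) {0..<k + 2}"
    unfolding g_def using bij_betw_extend_two[OF f(1) a(1,2) a(3)[symmetric]] .
  have low: "g x div 2 < k div 2" if "x \<in> W" for x
  proof -
    have "g x < k div 2 * 2"
      using that f a(1,2) unfolding g_def bij_betw_def by auto
    then show ?thesis
      by (rule less_mult_imp_div_less)
  qed
  have top: "g x div 2 = k div 2" if "x \<in> {a, p a}" for x
    using that f(2) a(3) unfolding g_def by auto
  show "\<forall>x\<in>insert a (insert (p a) W). \<forall>y\<in>insert a (insert (p a) W).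
      g x div 2 = g y div 2 \<longleftrightarrow> y = x \<or> y = p x"
  proof (intro ballI)
    fix x y assume xy: "x \<in> insert a (insert (p a) W)" "y \<in> insert a (insert (p a) W)"
    consider "x \<in> W" "y \<in> W" | "x \<in> W" "y \<in> {a, p a}" | "x \<in> {a, p a}" "y \<in> W"
      | "x \<in> {a, p a}" "y \<in> {a, p a}"
      using xy by blast
    then show "g x div 2 = g y div 2 \<longleftrightarrow> y = x \<or> y = p x"
    proof cases
      case 1
      then show ?thesis
        using pairs a(1,2) by (auto simp: g_def)
    next
      case 2
      then show ?thesis
        using low[of x] top[of y] closed a(1,2) by auto
    next
      case 3
      then show ?thesis
        using low[of y] top[of x] a by auto
    next
      case 4
      then show ?thesis
        using top a(3,4) by auto
    qed
  qed
qed

text \<open>The pairs $\{x, p x\}$ are numbered consecutively: the $i$-th pair is sent to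
  $\{2i, 2i + 1\}$.\<close>

lemma involution_enumeration:
  assumes "finite W" "\<forall>x\<in>W. p x \<in> W \<and> p x \<noteq> x \<and> p (p x) = x"
  shows "even (card W) \<and> (\<exists>f. bij_betw f W {0..<card W} \<and>
    (\<forall>x\<in>W. \<forall>y\<in>W. f x div 2 = f y div 2 \<longleftrightarrow> y = x \<or> y = p x))"
  using assms
proof (induction "card W" arbitrary: W rule: less_induct)
  case less
  show ?case
  proof (cases "W = {}")
    case True
    then show ?thesis
      by (auto simp: bij_betw_def)
  next
    case False
    then obtain a where a: "a \<in> W"
      by blast
    let ?W = "W - {a, p a}"
    have b: "p a \<in> W" "p a \<noteq> a" "p (p a) = a"
      using less.prems(2) a by auto
    have W: "W = insert a (insert (p a) ?W)"
      using a b(1) by blast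
    have "card ?W = card W - 2" "2 \<le> card W"
      using less.prems(1) a b card_mono[OF less.prems(1), of "{a, p a}"] by (simp_all add: card_Diff_subset)
    then have card_W: "card W = card ?W + 2"
      by linarith
    have closed: "\<forall>x\<in>?W. p x \<in> ?W \<and> p x \<noteq> x \<and> p (p x) = x"
      using less.prems(2) b(3) by (metis Diff_iff insertCI insertE singleton_iff)
    obtain f where ev: "even (card ?W)" and f: "bij_betw f ?W {0..<card ?W}"
      and pairs: "\<forall>x\<in>?W. \<forall>y\<in>?W. f x div 2 = f y div 2 \<longleftrightarrow> y = x \<or> y = p x"
      using less.hyps[OF _ _ closed] less.prems(1) card_W by auto
    have "?W \<inter> {a, p a} = {}"
      by blast
    then show ?thesis
      using pair_enumeration_extend[OF f ev pairs _ _ _ b(2,3)] closed ev card_W W[symmetric]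
      by auto
  qed
qed

lemma involution_iso_cocktail:
  assumes "finite V" "\<forall>x\<in>V. p x \<in> V \<and> p x \<noteq> x \<and> p (p x) = x"
    and "\<forall>x\<in>V. \<forall>y\<in>V. E x y \<longleftrightarrow> y \<noteq> x \<and> y \<noteq> p x"
  shows "even (card V) \<and> graph_iso V E {0..<card V} (cocktail_adj (card V))"
proof -
  obtain f where ev: "even (card V)" and f: "bij_betw f V {0..<card V}"
    and pairs: "\<forall>x\<in>V. \<forall>y\<in>V. f x div 2 = f y div 2 \<longleftrightarrow> y = x \<or> y = p x"
    using involution_enumeration[OF assms(1,2)] by blast
  have "E x y \<longleftrightarrow> cocktail_adj (card V) (f x) (f y)" if "x \<in> V" "y \<in> V" for x y
  proof -
    have "f x < card V" "f y < card V" "f x = f y \<longleftrightarrow> x = y"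
      using f that by (auto simp: bij_betw_def inj_on_def)
    then show ?thesis
      unfolding cocktail_adj_def using pairs assms(3) that by auto
  qed
  then show ?thesis
    using ev f unfolding graph_iso_def by blast
qed

context hypo_unique_graph
begin

lemma no_pendant:
  assumes "3 \<le> card V"
  shows "\<not> pendant E x v"
proof
  assume pendant: "pendant E x v"
  then have "v \<in> V" "x \<in> V - {v}"
    using E_in_V E_irrefl by (auto simp: pendant_def)
  obtain D where D: "gamma_set (V - {v}) E D"
    using gamma_set_delete_exists by blast
  have "x \<in> D"
  proof (rule ccontr)
    assume "x \<notin> D"
    then obtain u where "u \<in> D" "E x u"
      using gamma_set_dominating[OF D] \<open>x \<in> V - {v}\<close> by (auto simp: dominating_def)
    then show False
      using pendant gamma_set_subset[OF D] by (auto simp: pendant_def)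
  qed
  have "dominating V E (insert v (insert v D - {x}))"
    using dominating_replace_pendants[OF symp_E dominating_insert[OF gamma_set_dominating[OF D]]]
      \<open>v \<in> V\<close> \<open>x \<in> D\<close> pendant by simp
  moreover have "insert v (insert v D - {x}) = insert v (D - {x})"
    using \<open>x \<in> V - {v}\<close> by blast
  ultimately have "gamma V E \<le> card (insert v (D - {x}))"
    using gamma_le[OF finite_V] by simp
  also have "\<dots> < gamma V E"
    using card_insert_Diff_le[OF gamma_set_finite[OF _ D], of "{x}" v] \<open>x \<in> D\<close> finite_V
      gamma_set_card[OF D] gamma_delete_vertex[OF assms \<open>v \<in> V\<close>] gamma_V_pos by simp
  finally show False
    by simp
qed

lemma no_isolated_delete:
  assumes "3 \<le> card V" "x \<in> V - {u}"
  shows "\<exists>y\<in>V - {u}. E x y"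
proof -
  obtain y where "E x y"
    using exists_nbr assms(2) by blast
  then obtain y' where "E x y'" "y' \<noteq> u"
    using no_pendant[OF assms(1)] by (auto simp: pendant_def)
  then show ?thesis
    using E_in_V by blast
qed

lemma exists_two_nbrs:
  assumes "3 \<le> card V" "x \<in> V"
  shows "\<exists>y z. y \<noteq> z \<and> E x y \<and> E x z"
proof -
  obtain y where "E x y"
    using exists_nbr assms(2) by blast
  moreover obtain z where "E x z" "z \<noteq> y"
    using no_pendant[OF assms(1)] \<open>E x y\<close> by (auto simp: pendant_def)
  ultimately show ?thesis
    by blast
qed

text \<open>The unique $\gamma$-set of $G - v$ has two private neighbours per vertex, so
  $2(\gamma - 1) \<le> (n - 1) - (\gamma - 1)$.\<close>

theorem three_gamma_le: "3 * gamma V E \<le> card V + 2"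
proof (cases "3 \<le> card V")
  case True
  then obtain v where v: "v \<in> V"
    by fastforce
  obtain D where D: "gamma_set (V - {v}) E D"
    using gamma_set_delete_exists by blast
  have "2 * card D \<le> card (V - {v} - D)"
    using unique_gamma_set_card_le[OF _ symp_E irreflp_E _ D] gamma_set_delete_unique[OF v _ D]
      no_isolated_delete[OF True] finite_V by blast
  also have "\<dots> = card V - 1 - card D"
    using gamma_set_subset[OF D] gamma_set_finite[OF _ D] finite_V v by (simp add: card_Diff_subset)
  finally show ?thesis
    using gamma_set_card[OF D] gamma_delete_vertex[OF True v] gamma_V_pos True by linarith
next
  case False
  then show ?thesis
    using gamma_V_less_card by linarith
qed

lemma gamma_eq_1_iff_card_2: "gamma V E = 1 \<longleftrightarrow> card V = 2"
proof
  assume gamma: "gamma V E = 1"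
  show "card V = 2"
  proof (rule ccontr)
    assume "card V \<noteq> 2"
    then have "3 \<le> card V"
      using card_V_ge_2 by linarith
    moreover obtain v where "v \<in> V"
      using card_V_ge_2 by fastforce
    ultimately have "gamma (V - {v}) E = 0"
      using gamma_delete_vertex gamma by simp
    moreover have "2 \<le> card (V - {v})"
      using \<open>3 \<le> card V\<close> \<open>v \<in> V\<close> finite_V by simp
    then have "V - {v} \<noteq> {}"
      by (intro notI) simp
    ultimately show False
      using gamma_pos[of "V - {v}" E] finite_V by simp
  qed
next
  assume "card V = 2"
  then show "gamma V E = 1"
    using gamma_V_pos gamma_V_less_card by linarith
qed

lemma card_2_iso_K2:
  assumes "card V = 2"
  shows "graph_iso V E {0..<2} (complete_adj 2)"
proof -
  obtain a b where V: "V = {a, b}" "a \<noteq> b"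
    using assms by (auto simp: card_2_iff)
  then have "E a b"
    using exists_nbr[of a] E_in_V(2) E_irrefl by blast
  define f :: "'a \<Rightarrow> nat" where "f z = (if z = a then 0 else 1)" for z
  have "bij_betw f V {0..<2}"
    unfolding bij_betw_def inj_on_def V f_def using V(2) by auto
  moreover have "\<forall>x\<in>V. \<forall>y\<in>V. E x y \<longleftrightarrow> complete_adj 2 (f x) (f y)"
    unfolding V f_def complete_adj_def using V(2) \<open>E a b\<close> E_sym[OF \<open>E a b\<close>] E_irrefl by auto
  ultimately show ?thesis
    unfolding graph_iso_def by blast
qed

lemma gamma_eq_1_iff_iso_K2: "gamma V E = 1 \<longleftrightarrow> graph_iso V E {0..<2} (complete_adj 2)"
  using gamma_eq_1_iff_card_2 card_2_iso_K2 graph_iso_card by blast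

text \<open>For $\gamma = 2$ the $\gamma$-set $\{w\}$ of $G - v$ is a vertex whose only non-neighbour
  is $v$.\<close>

lemma gamma_eq_2_nonnbrs:
  assumes "gamma V E = 2" "v \<in> V"
  shows "\<exists>w\<in>V. {z \<in> V. z \<noteq> w \<and> \<not> E w z} = {v}"
proof -
  have "3 \<le> card V"
    using assms(1) gamma_V_less_card by simp
  obtain D where D: "gamma_set (V - {v}) E D"
    using gamma_set_delete_exists by blast
  then have "card D = 1"
    using gamma_set_card[OF D] gamma_delete_vertex[OF \<open>3 \<le> card V\<close> assms(2)] assms(1) by simp
  then obtain w where w: "D = {w}"
    by (auto simp: card_Suc_eq)
  then have "w \<in> V" "w \<noteq> v" "\<forall>z\<in>V - {v, w}. E w z"
    using gamma_set_dominating[OF D] E_sym by (auto simp: dominating_def)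
  moreover have "\<not> E w v"
  proof
    assume "E w v"
    then have "dominating V E {w}"
      using \<open>w \<in> V\<close> \<open>\<forall>z\<in>V - {v, w}. E w z\<close> E_sym by (auto simp: dominating_def)
    then show False
      using gamma_le[OF finite_V] assms(1) by fastforce
  qed
  ultimately show ?thesis
    using assms(2) E_irrefl by blast
qed

lemma gamma_eq_2_unique_nonnbr:
  assumes "gamma V E = 2" "u \<in> V"
  shows "\<exists>z. {z' \<in> V. z' \<noteq> u \<and> \<not> E u z'} = {z}"
proof -
  let ?N = "\<lambda>w. {z \<in> V. z \<noteq> w \<and> \<not> E w z}"
  have "\<forall>v\<in>V. \<exists>w. w \<in> V \<and> ?N w = {v}"
    using gamma_eq_2_nonnbrs[OF assms(1)] by blast
  then obtain W where W: "\<forall>v\<in>V. W v \<in> V \<and> ?N (W v) = {v}"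
    by metis
  then have "inj_on W V"
    by (intro inj_onI) (metis singleton_inject)
  then have "W ` V = V"
    using endo_inj_surj[OF finite_V] W by blast
  then obtain v where "v \<in> V" "u = W v"
    using assms(2) by blast
  then show ?thesis
    using W by blast
qed

lemma gamma_eq_2_iso_cocktail:
  assumes "gamma V E = 2"
  shows "4 \<le> card V \<and> even (card V) \<and> graph_iso V E {0..<card V} (cocktail_adj (card V))"
proof -
  have "\<forall>u\<in>V. \<exists>z. {z' \<in> V. z' \<noteq> u \<and> \<not> E u z'} = {z}"
    using gamma_eq_2_unique_nonnbr[OF assms] by blast
  then obtain p where p: "\<forall>u\<in>V. {z \<in> V. z \<noteq> u \<and> \<not> E u z} = {p u}"
    by metis
  then have "\<forall>x\<in>V. p x \<in> V \<and> p x \<noteq> x \<and> p (p x) = x"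
    using E_sym by (metis (mono_tags, lifting) insertCI mem_Collect_eq singletonD)
  moreover have "\<forall>x\<in>V. \<forall>y\<in>V. E x y \<longleftrightarrow> y \<noteq> x \<and> y \<noteq> p x"
    using p E_irrefl by (auto simp: set_eq_iff)
  ultimately have "even (card V) \<and> graph_iso V E {0..<card V} (cocktail_adj (card V))"
    by (rule involution_iso_cocktail[OF finite_V])
  moreover have "card V \<noteq> 3"
    using calculation by auto
  then have "4 \<le> card V"
    using assms gamma_V_less_card by simp
  ultimately show ?thesis
    by blast
qed

lemma iso_cocktail_gamma_eq_2:
  assumes "4 \<le> card V" "graph_iso V E {0..<card V} (cocktail_adj (card V))"
  shows "gamma V E = 2"
proof -
  obtain f where f: "bij_betw f V {0..<card V}"
    "\<forall>x\<in>V. \<forall>y\<in>V. E x y \<longleftrightarrow> cocktail_adj (card V) (f x) (f y)"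
    using assms(2) unfolding graph_iso_def by blast
  have "f ` V = {0..<card V}"
    using f(1) by (simp add: bij_betw_def)
  then have "0 \<in> f ` V" "1 \<in> f ` V"
    using assms(1) by simp_all
  then obtain a b where a: "a \<in> V" "f a = 0" and b: "b \<in> V" "f b = 1"
    by (metis imageE)
  have "dominating V E {a, b}"
    unfolding dominating_def
  proof (intro conjI ballI)
    fix z assume z: "z \<in> V - {a, b}"
    then have "f z \<noteq> f a" "f z \<noteq> f b"
      using inj_on_eq_iff[OF bij_betw_imp_inj_on[OF f(1)]] a(1) b(1) by auto
    moreover have "f z < card V"
      using z \<open>f ` V = {0..<card V}\<close> by auto
    ultimately have "E z a"
      using f(2) z a b by (simp add: cocktail_adj_def)
    then show "\<exists>u\<in>{a, b}. E z u"
      by blast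
  qed (use a b in blast)
  moreover have "card {a, b} \<le> 2"
    by (cases "a = b") auto
  ultimately have "gamma V E \<le> 2"
    using gamma_le[OF finite_V] le_trans by blast
  then show ?thesis
    using gamma_eq_1_iff_card_2 gamma_V_pos assms(1) by linarith
qed

end

lemma graph_iso_trans:
  assumes "graph_iso V E W F" "graph_iso W F U H"
  shows "graph_iso V E U H"
proof -
  obtain f where f: "bij_betw f V W" "\<forall>x\<in>V. \<forall>y\<in>V. E x y \<longleftrightarrow> F (f x) (f y)"
    using assms(1) unfolding graph_iso_def by blast
  obtain g where g: "bij_betw g W U" "\<forall>x\<in>W. \<forall>y\<in>W. F x y \<longleftrightarrow> H (g x) (g y)"
    using assms(2) unfolding graph_iso_def by blast
  have "\<forall>x\<in>V. \<forall>y\<in>V. E x y \<longleftrightarrow> H ((g \<circ> f) x) ((g \<circ> f) y)"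
    using f g bij_betw_apply[OF f(1)] by simp
  then show ?thesis
    unfolding graph_iso_def using bij_betw_trans[OF f(1) g(1)] by blast
qed

lemma list_graph_iso:
  assumes "distinct xs" "set xs = V" "length xs = m"
    and "\<forall>i<m. \<forall>j<m. E (xs ! i) (xs ! j) \<longleftrightarrow> F i j"
  shows "graph_iso V E {0..<m} F"
proof -
  have bij: "bij_betw (nth xs) {0..<m} V"
    using bij_betw_nth[OF assms(1)] assms(2,3) by (simp add: atLeast0LessThan)
  define f where "f = the_inv_into {0..<m} (nth xs)"
  have f: "bij_betw f V {0..<m}"
    unfolding f_def by (rule bij_betw_the_inv_into[OF bij])
  have "xs ! f x = x" "f x < m" if "x \<in> V" for x
    using f_the_inv_into_f_bij_betw[OF bij that] bij_betw_apply[OF f that] by (simp_all add: f_def)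
  then have "\<forall>x\<in>V. \<forall>y\<in>V. E x y \<longleftrightarrow> F (f x) (f y)"
    using assms(4) by metis
  then show ?thesis
    unfolding graph_iso_def using f by blast
qed

lemma cocktail_4_iso_cycle_4: "graph_iso {0..<4} (cocktail_adj 4) {0..<4} (cycle_adj 4)"
proof (rule list_graph_iso[where xs = "[0, 2, 1, 3]"])
  have all_less_4: "(\<forall>i<(4::nat). P i) \<longleftrightarrow> P 0 \<and> P 1 \<and> P 2 \<and> P 3" for P
    by (auto simp: less_Suc_eq numeral_eq_Suc)
  show "\<forall>i<4. \<forall>j<4. cocktail_adj 4 ([0, 2, 1, 3] ! i) ([0, 2, 1, 3] ! j) \<longleftrightarrow> cycle_adj 4 i j"
    unfolding all_less_4 by (simp add: cocktail_adj_def cycle_adj_def)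
qed auto

section \<open>The extremal graph of order seven\<close>

lemma mod_Suc_eq_iff_pred:
  fixes i j m :: nat
  assumes "i < m" "j < m"
  shows "i = Suc j mod m \<longleftrightarrow> j = (i + m - 1) mod m"
proof (cases "i = 0")
  case True
  then show ?thesis
    using assms by (auto simp: mod_Suc le_less_Suc_eq)
next
  case False
  then have "(i + m - 1) mod m = i - 1"
    using assms(1) by (simp add: mod_if)
  then show ?thesis
    using assms False by (auto simp: mod_Suc)
qed

lemma degree_two_cycle_iso:
  assumes "symp E" "distinct xs" "set xs = V" "length xs = m" "3 \<le> m"
    and cycle: "\<forall>i<m. E (xs ! i) (xs ! (Suc i mod m))"
    and degree: "\<forall>x\<in>V. card {y. E x y} = 2"
  shows "graph_iso V E {0..<m} (cycle_adj m)"
proof (rule list_graph_iso[OF assms(2-4)], intro allI impI)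
  fix i j assume i: "i < m" and j: "j < m"
  let ?prev = "(i + m - 1) mod m"
  have prev: "?prev < m"
    using i by simp
  then have "i = Suc ?prev mod m"
    using mod_Suc_eq_iff_pred[OF i prev] by simp
  then have "E (xs ! ?prev) (xs ! i)"
    using cycle prev by metis
  then have "E (xs ! i) (xs ! ?prev)"
    using assms(1) by (simp add: symp_def)
  moreover have "E (xs ! i) (xs ! (Suc i mod m))"
    using cycle i by blast
  moreover have "Suc i mod m \<noteq> ?prev"
    using assms(5) i by (auto simp: mod_Suc mod_if split: if_splits)
  moreover have deg: "card {y. E (xs ! i) y} = 2"
    using degree assms(3,4) i by auto
  then have "finite {y. E (xs ! i) y}"
    by (intro card_ge_0_finite) simp
  ultimately have "{y. E (xs ! i) y} = {xs ! (Suc i mod m), xs ! ?prev}"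
    using deg assms(2,4) i prev
    by (intro card_subset_eq[symmetric]) (auto simp: nth_eq_iff_index_eq)
  then have "E (xs ! i) (xs ! j) \<longleftrightarrow> xs ! j = xs ! (Suc i mod m) \<or> xs ! j = xs ! ?prev"
    by (simp add: set_eq_iff)
  also have "\<dots> \<longleftrightarrow> j = Suc i mod m \<or> j = ?prev"
    using nth_eq_iff_index_eq[OF assms(2)] assms(4) i j prev by simp
  finally show "E (xs ! i) (xs ! j) \<longleftrightarrow> cycle_adj m i j"
    using mod_Suc_eq_iff_pred[OF i j] i j by (auto simp: cycle_adj_def)
qed

locale hypo_unique_graph_7_3 = hypo_unique_graph +
  assumes card_V: "card V = 7" and gamma_V: "gamma V E = 3"
begin

lemma gamma_delete: "u \<in> V \<Longrightarrow> gamma (V - {u}) E = 2"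
  using gamma_delete_vertex card_V gamma_V by simp

lemma dominating_pair_gamma_set:
  assumes "u \<in> V" "a \<noteq> b" "dominating (V - {u}) E {a, b}"
  shows "gamma_set (V - {u}) E {a, b}"
  using assms gamma_delete finite_V by (intro gamma_setI) simp_all

lemma dominating_pair_exists:
  assumes "u \<in> V"
  shows "\<exists>a b. a \<noteq> b \<and> dominating (V - {u}) E {a, b}"
proof -
  obtain D where D: "gamma_set (V - {u}) E D"
    using gamma_set_delete_exists by blast
  then obtain a b where "D = {a, b}" "a \<noteq> b"
    using gamma_set_card gamma_delete[OF assms] by (metis card_2_iff)
  then show ?thesis
    using gamma_set_dominating[OF D] by blast
qed

lemma dominating_pair_unique:
  assumes "u \<in> V" "a \<noteq> b" "dominating (V - {u}) E {a, b}" "c \<noteq> d" "dominating (V - {u}) E {c, d}"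
  shows "{c, d} = {a, b}"
  using gamma_set_delete_unique[OF assms(1)] dominating_pair_gamma_set assms by blast

text \<open>Here $3\gamma(G) = n + 2$, so the unique $\gamma$-set $\{a, b\}$ of $G - u$ is extremal:
  the four remaining vertices split into two private neighbours of $a$ and two of $b$.\<close>

lemma dominating_pair_structure:
  assumes "u \<in> V" "a \<noteq> b" "dominating (V - {u}) E {a, b}"
  shows "\<not> E u a" "\<forall>z\<in>V - {u, a, b}. E z a \<longleftrightarrow> \<not> E z b"
    "card {z \<in> V - {u, a, b}. E z a} = 2"
proof -
  have D: "gamma_set (V - {u}) E {a, b}"
    by (rule dominating_pair_gamma_set[OF assms])
  have ab: "a \<in> V" "b \<in> V" "a \<noteq> u" "b \<noteq> u"
    using gamma_set_subset[OF D] by auto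
  show "\<not> E u a"
  proof
    assume "E u a"
    then have "dominating V E {a, b}"
      using assms(3) ab by (auto simp: dominating_def)
    then show False
      using gamma_le[OF finite_V, of E "{a, b}"] gamma_V assms(2) by simp
  qed
  have "card (V - {u} - {a, b}) = 4"
    using card_V ab assms(1,2) finite_V by (simp add: card_Diff_subset)
  then have tight: "card (V - {u} - {a, b}) = 2 * card {a, b}"
    using assms(2) by simp
  note eq = unique_gamma_set_card_eq[OF _ symp_E irreflp_E _ D gamma_set_delete_unique[OF assms(1) _ D] tight]
  have isolated: "\<forall>x\<in>V - {u}. \<exists>y\<in>V - {u}. E x y"
    using no_isolated_delete card_V by simp
  have private_eq: "private_nbrs (V - {u}) E {a, b} c = {z \<in> V - {u, a, b}. E z c \<and> \<not> E z (if c = a then b else a)}"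
    if "c \<in> {a, b}" for c
    using that assms(2) by (auto simp: private_nbrs_def)
  have split: "V - {u, a, b} = private_nbrs (V - {u}) E {a, b} a \<union> private_nbrs (V - {u}) E {a, b} b"
    using eq(2) finite_V isolated by auto
  show exact: "\<forall>z\<in>V - {u, a, b}. E z a \<longleftrightarrow> \<not> E z b"
    using split private_eq assms(2) by auto
  have "{z \<in> V - {u, a, b}. E z a} = private_nbrs (V - {u}) E {a, b} a"
    using private_eq[of a] exact by auto
  then show "card {z \<in> V - {u, a, b}. E z a} = 2"
    using eq(1) finite_V isolated by simp
qed

lemma dominating_pair_side:
  assumes "u \<in> V" "a \<noteq> b" "dominating (V - {u}) E {a, b}"
    and "p1 \<noteq> p2" "p1 \<in> V - {u, a, b}" "p2 \<in> V - {u, a, b}" "E p1 a" "E p2 a"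
  shows "{z \<in> V - {u, a, b}. E z a} = {p1, p2}"
proof -
  have "finite {z \<in> V - {u, a, b}. E z a}"
    using finite_V by simp
  moreover have "{p1, p2} \<subseteq> {z \<in> V - {u, a, b}. E z a}"
    using assms(5-8) by blast
  ultimately show ?thesis
    using dominating_pair_structure(3)[OF assms(1-3)] assms(4) by (intro card_subset_eq[symmetric]) simp_all
qed

lemma dominating_pair_side_independent:
  assumes "u \<in> V" "a \<noteq> b" "dominating (V - {u}) E {a, b}"
    and "q1 \<noteq> q2" "q1 \<in> V - {u, a, b}" "q2 \<in> V - {u, a, b}" "E q1 b" "E q2 b"
  shows "\<not> E q1 q2"
proof
  assume "E q1 q2"
  have ba: "b \<noteq> a" "dominating (V - {u}) E {b, a}" "V - {u, b, a} = V - {u, a, b}"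
    using assms(2,3) by (auto simp: insert_commute)
  have "q1 \<in> V - {u, b, a}" "q2 \<in> V - {u, b, a}"
    using assms(5,6) by auto
  from dominating_pair_side[OF assms(1) ba(1,2) assms(4) this assms(7,8)]
  have side_b: "{z \<in> V - {u, a, b}. E z b} = {q1, q2}"
    unfolding ba(3) .
  have "dominating (V - {u}) E {a, q1}"
    unfolding dominating_def
  proof (intro conjI ballI)
    show "{a, q1} \<subseteq> V - {u}"
      using assms(3,5) by (auto simp: dominating_def)
  next
    fix z assume z: "z \<in> V - {u} - {a, q1}"
    show "\<exists>x\<in>{a, q1}. E z x"
    proof (cases "z = b \<or> z = q2")
      case True
      then show ?thesis
        using E_sym[OF assms(7)] E_sym[OF \<open>E q1 q2\<close>] by blast
    next
      case False
      then have "\<not> E z b"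
        using side_b z by blast
      then show ?thesis
        using dominating_pair_structure(2)[OF assms(1-3)] z False by blast
    qed
  qed
  moreover have "a \<noteq> q1"
    using assms(5) by blast
  ultimately have "{a, q1} = {a, b}"
    using dominating_pair_unique[OF assms(1-3)] by simp
  then show False
    using assms(5) by (auto simp: doubleton_eq_iff)
qed

lemma dominating_pair_switch:
  assumes "u \<in> V" "a \<noteq> b" "dominating (V - {u}) E {a, b}"
    and p: "p1 \<noteq> p2" "p1 \<in> V - {u, a, b}" "p2 \<in> V - {u, a, b}" "E p1 a" "E p2 a" "E u p1" "E u p2"
  shows "dominating (V - {a}) E {u, b}"
  unfolding dominating_def
proof (intro conjI ballI)
  show "{u, b} \<subseteq> V - {a}"
    using assms(1-3) by (auto simp: dominating_def)
next
  fix z assume z: "z \<in> V - {a} - {u, b}"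
  show "\<exists>x\<in>{u, b}. E z x"
  proof (cases "E z a")
    case True
    then have "z = p1 \<or> z = p2"
      using dominating_pair_side[OF assms(1-3) p(1-5)] z by blast
    then show ?thesis
      using E_sym[OF p(6)] E_sym[OF p(7)] by blast
  next
    case False
    then show ?thesis
      using dominating_pair_structure(2)[OF assms(1-3)] z by blast
  qed
qed

text \<open>If $u$ is adjacent to both private neighbours $p_1, p_2$ of $a$, then $\{u, b\}$ dominates
  $G - a$, so the private neighbours of $b$ are not adjacent to $u$; they are not adjacent to each
  other either, so having degree at least two they must see $p_1$ or $p_2$.\<close>

lemma dominating_pair_other_side_adj:
  assumes "u \<in> V" "a \<noteq> b" "dominating (V - {u}) E {a, b}"
    and p: "p1 \<noteq> p2" "p1 \<in> V - {u, a, b}" "p2 \<in> V - {u, a, b}" "E p1 a" "E p2 a" "E u p1" "E u p2"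
    and q: "q \<in> V - {u, a, b}" "E q b"
  shows "E q p1 \<or> E q p2"
proof -
  have side_a: "{z \<in> V - {u, a, b}. E z a} = {p1, p2}"
    by (rule dominating_pair_side[OF assms(1-3) p(1-5)])
  note exact = dominating_pair_structure(2)[OF assms(1-3)]
  have "a \<in> V" "u \<noteq> b"
    using assms(3) by (auto simp: dominating_def)
  then have "\<forall>z\<in>V - {a, u, b}. E z u \<longleftrightarrow> \<not> E z b"
    using dominating_pair_structure(2)[OF _ _ dominating_pair_switch[OF assms(1-3) p]] by blast
  then have "\<not> E q u"
    using q by blast
  have nbr: "y \<in> {b, p1, p2}" if "E q y" for y
  proof -
    have "y \<in> V" "y \<noteq> q" "y \<noteq> u" "y \<noteq> a"
      using that E_in_V E_irrefl \<open>\<not> E q u\<close> exact q by blast+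
    moreover have "y \<in> {p1, p2}" if "y \<in> V - {u, a, b}"
    proof (cases "E y a")
      case True
      then show ?thesis
        using side_a that by blast
    next
      case False
      then have "E y b"
        using exact that by blast
      then show ?thesis
        using dominating_pair_side_independent[OF assms(1-3) _ q(1) that q(2)] \<open>E q y\<close> \<open>y \<noteq> q\<close>
        by blast
    qed
    ultimately show ?thesis
      by blast
  qed
  obtain y1 y2 where "y1 \<noteq> y2" "E q y1" "E q y2"
    using exists_two_nbrs card_V q by force
  then show ?thesis
    using nbr by blast
qed

lemma dominating_pair_side_nbrs:
  assumes "u \<in> V" "a \<noteq> b" "dominating (V - {u}) E {a, b}"
    and p: "p1 \<noteq> p2" "p1 \<in> V - {u, a, b}" "p2 \<in> V - {u, a, b}" "E p1 a" "E p2 a"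
  shows "\<not> (E u p1 \<and> E u p2)"
proof
  assume u: "E u p1 \<and> E u p2"
  have side_a: "{z \<in> V - {u, a, b}. E z a} = {p1, p2}"
    by (rule dominating_pair_side[OF assms(1-3) p])
  have "b \<in> V" "a \<in> V"
    using assms(3) by (auto simp: dominating_def)
  have "dominating (V - {b}) E {p1, p2}"
    unfolding dominating_def
  proof (intro conjI ballI)
    fix z assume z: "z \<in> V - {b} - {p1, p2}"
    show "\<exists>x\<in>{p1, p2}. E z x"
    proof (cases "z \<in> {u, a}")
      case True
      then show ?thesis
        using u E_sym[OF p(4)] by blast
    next
      case False
      then have "\<not> E z a" "z \<in> V - {u, a, b}"
        using side_a z by blast+
      then have "E z b"
        using dominating_pair_structure(2)[OF assms(1-3)] by blast
      then show ?thesis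
        using dominating_pair_other_side_adj[OF assms(1-3) p] u \<open>z \<in> V - {u, a, b}\<close> by blast
    qed
  qed (use p in blast)
  then have "\<forall>z\<in>V - {b, p1, p2}. E z p1 \<longleftrightarrow> \<not> E z p2"
    using dominating_pair_structure(2)[OF \<open>b \<in> V\<close> p(1)] by blast
  moreover have "u \<in> V - {b, p1, p2}"
    using assms(1,3) p(2,3) by (auto simp: dominating_def)
  ultimately show False
    using u by blast
qed

lemma dominating_pair_nbrs:
  assumes "u \<in> V" "a \<noteq> b" "dominating (V - {u}) E {a, b}"
  shows "\<exists>p q. E p a \<and> E q b \<and> p \<in> V - {u, a, b} \<and> q \<in> V - {u, a, b} \<and> {y. E u y} = {p, q}"
proof -
  have ba: "b \<noteq> a" "dominating (V - {u}) E {b, a}" and R: "V - {u, b, a} = V - {u, a, b}"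
    using assms(2,3) by (auto simp: insert_commute)
  note exact = dominating_pair_structure(2)[OF assms(1-3)]
  have one_a: "y = y'" if "E u y" "E u y'" "y \<in> V - {u, a, b}" "y' \<in> V - {u, a, b}" "E y a" "E y' a"
    for y y'
    using dominating_pair_side_nbrs[OF assms(1-3), of y y'] that by blast
  have one_b: "y = y'" if "E u y" "E u y'" "y \<in> V - {u, a, b}" "y' \<in> V - {u, a, b}" "E y b" "E y' b"
    for y y'
    using dominating_pair_side_nbrs[OF assms(1) ba, of y y'] that R by blast
  have nbr: "y \<in> V - {u, a, b}" if "E u y" for y
    using that E_in_V E_irrefl dominating_pair_structure(1)[OF assms(1-3)]
      dominating_pair_structure(1)[OF assms(1) ba] by blast
  obtain y1 y2 where y: "y1 \<noteq> y2" "E u y1" "E u y2"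
    using exists_two_nbrs card_V assms(1) by force
  have "y1 \<in> V - {u, a, b}" "y2 \<in> V - {u, a, b}"
    using nbr y by blast+
  then obtain p q where pq: "E u p" "E u q" "p \<in> V - {u, a, b}" "q \<in> V - {u, a, b}" "E p a" "E q b"
    using exact y one_a one_b by metis
  have "{y. E u y} = {p, q}"
    using pq nbr exact one_a one_b by blast
  then show ?thesis
    using pq by blast
qed

lemma degree_two:
  assumes "x \<in> V"
  shows "card {y. E x y} = 2"
proof -
  obtain a b where ab: "a \<noteq> b" "dominating (V - {x}) E {a, b}"
    using dominating_pair_exists[OF assms] by blast
  then obtain p q where "E p a" "E q b" "q \<in> V - {x, a, b}" "{y. E x y} = {p, q}"
    using dominating_pair_nbrs[OF assms] by blast
  moreover have "p \<noteq> q"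
    using dominating_pair_structure(2)[OF assms ab] calculation by blast
  ultimately show ?thesis
    by simp
qed

lemma nbrs_eq_pair:
  assumes "x \<in> V" "s \<noteq> t" "E x s" "E x t"
  shows "{y. E x y} = {s, t}"
proof -
  have "finite {y. E x y}"
    using degree_two[OF assms(1)] by (intro card_ge_0_finite) simp
  then show ?thesis
    using degree_two[OF assms(1)] assms(2-4) by (intro card_subset_eq[symmetric]) auto
qed

lemma local_structure:
  assumes v: "v \<in> V"
  obtains a b p1 p2 q1 q2 where "V = {v, a, b, p1, p2, q1, q2}" "distinct [v, p1, a, p2, q2, b, q1]"
    "E p1 a" "E p2 a" "E q1 b" "E q2 b" "\<not> E p2 b" "{y. E v y} = {p1, q1}"
proof -
  obtain a b where ab: "a \<noteq> b" "dominating (V - {v}) E {a, b}"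
    using dominating_pair_exists[OF v] by blast
  let ?R = "V - {v, a, b}"
  note exact = dominating_pair_structure(2)[OF v ab]
  obtain p1 q1 where pq1: "E p1 a" "E q1 b" "p1 \<in> ?R" "q1 \<in> ?R" and N_v: "{y. E v y} = {p1, q1}"
    using dominating_pair_nbrs[OF v ab] by blast
  obtain p2 where p2: "p2 \<in> ?R" "E p2 a" "p2 \<noteq> p1"
    using dominating_pair_structure(3)[OF v ab] pq1(1,3) by (metis (mono_tags, lifting) card_2_iff'
        mem_Collect_eq)
  have ba: "b \<noteq> a" "dominating (V - {v}) E {b, a}" and R: "V - {v, b, a} = ?R"
    using ab by (auto simp: insert_commute)
  obtain q2 where q2: "q2 \<in> ?R" "E q2 b" "q2 \<noteq> q1"
    using dominating_pair_structure(3)[OF v ba] pq1(2,4) R by (metis (mono_tags, lifting) card_2_iff'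
        mem_Collect_eq)
  have sides: "{z \<in> ?R. E z a} = {p1, p2}" "{z \<in> ?R. E z b} = {q1, q2}"
    using dominating_pair_side[OF v ab p2(3)[symmetric] pq1(3) p2(1) pq1(1) p2(2)]
      dominating_pair_side[OF v ba q2(3)[symmetric]] pq1(2,4) q2(1,2) R by (simp_all add: insert_commute)
  have R_eq: "?R = {p1, p2} \<union> {q1, q2}"
    using sides exact by blast
  have "{v, a, b} \<subseteq> V"
    using v ab(2) by (auto simp: dominating_def)
  then have "V = {v, a, b} \<union> ?R"
    by blast
  also have "\<dots> = {v, a, b, p1, p2, q1, q2}"
    unfolding R_eq by auto
  finally have "V = {v, a, b, p1, p2, q1, q2}" .
  moreover have "\<not> E q1 a" "\<not> E q2 a" "a \<noteq> v" "b \<noteq> v"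
    using exact pq1(2,4) q2(1,2) ab(2) by (auto simp: dominating_def)
  then have "distinct [v, p1, a, p2, q2, b, q1]"
    using ab(1) pq1 p2 q2 by auto
  moreover have "\<not> E p2 b"
    using exact p2(1,2) by blast
  ultimately show ?thesis
    using that pq1(1,2) p2(2) q2(2) N_v by blast
qed

text \<open>The cycle is $v, p_1, a, p_2, q_2, b, q_1$; its only edge not supplied by the local
  structure at $v$ is $p_2 q_2$, which is forced by the degrees.\<close>

theorem iso_cycle_7: "graph_iso V E {0..<7} (cycle_adj 7)"
proof -
  obtain v where v: "v \<in> V"
    using card_V by fastforce
  then obtain a b p1 p2 q1 q2 where V: "V = {v, a, b, p1, p2, q1, q2}"
    and distinct: "distinct [v, p1, a, p2, q2, b, q1]"
    and E: "E p1 a" "E p2 a" "E q1 b" "E q2 b" "\<not> E p2 b" and N_v: "{y. E v y} = {p1, q1}"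
    by (rule local_structure)
  have "E v p1" "E p1 v" "E q1 v" "E a p2" "E b q1"
    using N_v E_sym E(2,3) by blast+
  then have N_p1: "{y. E p1 y} = {a, v}" and N_q1: "{y. E q1 y} = {b, v}"
    using nbrs_eq_pair E(1,3) distinct V by auto
  obtain s t where "{y. E p2 y} = {s, t}" "s \<noteq> t"
    using degree_two[of p2] V by (auto simp: card_2_iff)
  then obtain x where x: "E p2 x" "x \<noteq> a"
    by (cases "s = a") (auto simp: set_eq_iff)
  have "x \<in> V" "x \<noteq> p2" "x \<noteq> b"
    using x(1) E(5) E_in_V E_irrefl by blast+
  moreover have "x \<noteq> v" "x \<noteq> p1" "x \<noteq> q1"
    using E_sym[OF x(1)] N_v N_p1 N_q1 distinct by auto
  ultimately have "E p2 q2"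
    using x V by auto
  have cycle: "\<forall>i<7. E ([v, p1, a, p2, q2, b, q1] ! i) ([v, p1, a, p2, q2, b, q1] ! (Suc i mod 7))"
  proof (intro allI impI)
    fix i :: nat assume "i < 7"
    then have "i \<in> {0, 1, 2, 3, 4, 5, 6}"
      by auto
    then show "E ([v, p1, a, p2, q2, b, q1] ! i) ([v, p1, a, p2, q2, b, q1] ! (Suc i mod 7))"
      using \<open>E v p1\<close> E(1) \<open>E a p2\<close> \<open>E p2 q2\<close> E(4) \<open>E b q1\<close> \<open>E q1 v\<close> by auto
  qed
  have "set [v, p1, a, p2, q2, b, q1] = V"
    using V by auto
  moreover have "\<forall>x\<in>V. card {y. E x y} = 2"
    using degree_two by blast
  ultimately show ?thesis
    using degree_two_cycle_iso[OF symp_E distinct _ _ _ cycle] by simp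
qed

end

context hypo_unique_graph
begin

lemma gamma_le_two_fifths: "gamma V E \<le> 2 * card V div 5 + 1"
  using three_gamma_le by presburger

lemma gamma_eq_2_iff:
  "gamma V E = 2 \<longleftrightarrow> 4 \<le> card V \<and> even (card V) \<and> graph_iso V E {0..<card V} (cocktail_adj (card V))"
  using gamma_eq_2_iso_cocktail iso_cocktail_gamma_eq_2 by blast

lemma gamma_extremal_cases:
  assumes "gamma V E = 2 * card V div 5 + 1"
  shows "card V = 2 \<and> gamma V E = 1 \<or> card V = 4 \<and> gamma V E = 2 \<or> card V = 7 \<and> gamma V E = 3"
  using assms three_gamma_le gamma_V_pos gamma_V_less_card by presburger

lemma gamma_extremal_iff:
  "gamma V E = 2 * card V div 5 + 1 \<longleftrightarrow>
    graph_iso V E {0..<2} (complete_adj 2) \<or> graph_iso V E {0..<4} (cycle_adj 4)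
    \<or> graph_iso V E {0..<7} (cycle_adj 7)"
proof
  assume "gamma V E = 2 * card V div 5 + 1"
  then consider "gamma V E = 1" | "card V = 4" "gamma V E = 2" | "card V = 7" "gamma V E = 3"
    using gamma_extremal_cases by blast
  then show "graph_iso V E {0..<2} (complete_adj 2) \<or> graph_iso V E {0..<4} (cycle_adj 4)
    \<or> graph_iso V E {0..<7} (cycle_adj 7)"
  proof cases
    case 1
    then show ?thesis
      using gamma_eq_1_iff_iso_K2 by blast
  next
    case 2
    then show ?thesis
      using gamma_eq_2_iso_cocktail graph_iso_trans[OF _ cocktail_4_iso_cycle_4] by auto
  next
    case 3
    then interpret hypo_unique_graph_7_3 V E
      by unfold_locales
    show ?thesis
      using iso_cycle_7 by blast
  qed
next
  assume "graph_iso V E {0..<2} (complete_adj 2) \<or> graph_iso V E {0..<4} (cycle_adj 4)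
    \<or> graph_iso V E {0..<7} (cycle_adj 7)"
  then consider "card V = 2" | "card V = 4" | "card V = 7"
    using graph_iso_card by blast
  then show "gamma V E = 2 * card V div 5 + 1"
    using gamma_eq_1_iff_card_2 gamma_eq_2_iff three_gamma_le gamma_V_pos by cases fastforce+
qed

end

theorem proposition3p5:
  fixes V :: "'a set" and E :: "'a \<Rightarrow> 'a \<Rightarrow> bool" and n :: nat
  assumes "graph V E" and "hypo_unique V E" and "n = card V"
  shows "1 \<le> gamma V E \<and> gamma V E \<le> (2 * n) div 5 + 1
    \<and> (gamma V E = 1 \<longleftrightarrow> graph_iso V E {0..<2} (complete_adj 2))
    \<and> (gamma V E = 2 \<longleftrightarrow> n \<ge> 4 \<and> even n \<and> graph_iso V E {0..<n} (cocktail_adj n))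
    \<and> (gamma V E = (2 * n) div 5 + 1 \<longleftrightarrow>
         graph_iso V E {0..<2} (complete_adj 2) \<or> graph_iso V E {0..<4} (cycle_adj 4)
         \<or> graph_iso V E {0..<7} (cycle_adj 7))"
proof -
  interpret hypo_unique_graph V E
    using assms(1,2) by unfold_locales
  show ?thesis
    using gamma_V_pos gamma_le_two_fifths gamma_eq_1_iff_iso_K2 gamma_eq_2_iff gamma_extremal_iff assms(3)
    by simp
qed

end
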